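(* Let $G$ be an uncountable Polish group. The following are equivalent: (1) every countable subset of $G$ is contained in a $G_\delta$ Haar null subset of $G$; (2) there exists a countable dense subset of $G$ that is contained in a $G_\delta$ Haar null subset of $G$; (3) $G$ can be written as the union of a meager set and a Haar null set.
   Context: A Polish group is a topological group whose topology is separable and completely metrizable. A set $A\subseteq G$ is Haar null if there are a Borel set $B\supseteq A$ and a Borel probability measure $\mu$ on $G$ with $\mu(gBh)=0$ for all $g,h\in G$. *)

theory Defs
  imports "HOL-Probability.Probability"
begin

text \<open>A Polish group is modelled as a type of class topological_group_add (a possibly
non-commutative group, written additively, with continuous operations) that is also a
polish_space (separable, with a compatible complete metric).\<close>

definition haar_null :: "'a::{topological_group_add, polish_space} set \<Rightarrow> bool" where
  "haar_null A \<longleftrightarrow>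
     (\<exists>B \<mu>. B \<in> sets borel \<and> A \<subseteq> B \<and> prob_space \<mu> \<and> sets \<mu> = sets (borel :: 'a measure) \<and>
        (\<forall>g h. measure \<mu> ((\<lambda>b. g + b + h) ` B) = 0))"

definition nowhere_dense :: "'a::topological_space set \<Rightarrow> bool" where
  "nowhere_dense A \<longleftrightarrow> interior (closure A) = {}"

definition meager :: "'a::topological_space set \<Rightarrow> bool" where
  "meager A \<longleftrightarrow> (\<exists>F. countable F \<and> (\<forall>N\<in>F. nowhere_dense N) \<and> A \<subseteq> \<Union>F)"

end

theory Submission
  imports Defs
begin

text \<open>A \<open>G\<^sub>\<delta>\<close> set \<open>H\<close> containing a dense set is a countable intersection of dense open
sets, so by the Baire category theorem countably many homeomorphic copies of \<open>H\<close> still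
have a common point. For countable \<open>C\<close>, a point \<open>x\<close> in all the right translates
\<open>H - c\<close> (\<open>c \<in> C\<close>) gives \<open>C \<subseteq> -x + H\<close>, a left translate of \<open>H\<close>, which is again
\<open>G\<^sub>\<delta>\<close> and Haar null; so (2) implies (1), while (1) implies (2) by separability.
A dense \<open>G\<^sub>\<delta>\<close> set \<open>H\<close> splits the group into the meager set \<open>-H\<close> and \<open>H\<close>, giving (3).
Conversely, the complement of a meager set \<open>M\<close> contains a dense \<open>G\<^sub>\<delta>\<close> set, which
lies in the Haar null part when the group is \<open>M \<union> N\<close>, and contains a countable dense set.\<close>

lemma gdelta_in_euclidean_iff:
  "gdelta_in euclidean H \<longleftrightarrow> (\<exists>T. countable T \<and> (\<forall>U\<in>T. open U) \<and> H = \<Inter>T)"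
  by (auto simp: gdelta_in_alt intersection_of_def)

lemma dense_gdelta_eq_Inter_dense_open:
  assumes "gdelta_in euclidean H" "closure H = UNIV"
  shows "\<exists>T. countable T \<and> (\<forall>U\<in>T. open U \<and> closure U = UNIV) \<and> H = \<Inter>T"
proof -
  obtain T where T: "countable T" "\<forall>U\<in>T. open U" "H = \<Inter>T"
    using assms(1) unfolding gdelta_in_euclidean_iff by auto
  have "closure U = UNIV" if "U \<in> T" for U
    using closure_mono[of H U] that T(3) assms(2) by auto
  with T show ?thesis
    by auto
qed

lemma dense_gdelta_Inter:
  fixes S :: "'a::polish_space set set"
  assumes "countable S" "\<And>H. H \<in> S \<Longrightarrow> gdelta_in euclidean H \<and> closure H = UNIV"
  shows "gdelta_in euclidean (\<Inter>S) \<and> closure (\<Inter>S) = UNIV"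
proof (cases "S = {}")
  case False
  have "\<forall>H\<in>S. \<exists>T. countable T \<and> (\<forall>U\<in>T. open U \<and> closure U = UNIV) \<and> H = \<Inter>T"
    using assms(2) dense_gdelta_eq_Inter_dense_open by meson
  then obtain T where T: "\<forall>H\<in>S. countable (T H) \<and> (\<forall>U\<in>T H. open U \<and> closure U = UNIV) \<and> H = \<Inter>(T H)"
    by (rule bchoice[THEN exE])
  then have "\<Inter>S = \<Inter>(\<Union>H\<in>S. T H)"
    by fastforce
  moreover have "euclidean closure_of \<Inter>(\<Union>H\<in>S. T H) = topspace (euclidean :: 'a topology)"
    using T assms(1) completely_metrizable_space_euclidean by (intro Baire_category) auto
  moreover have "gdelta_in euclidean (\<Inter>S)"
    using assms False by (intro gdelta_in_Inter) auto
  ultimately show ?thesis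
    by simp
qed (use gdelta_in_topspace[of euclidean] in simp)

lemma meager_Compl_dense_gdelta:
  assumes "gdelta_in euclidean H" "closure H = UNIV"
  shows "meager (- H)"
proof -
  obtain T where T: "countable T" "\<And>U. U \<in> T \<Longrightarrow> open U \<and> closure U = UNIV" "H = \<Inter>T"
    using dense_gdelta_eq_Inter_dense_open[OF assms] by blast
  have "nowhere_dense (- U)" if "U \<in> T" for U
    using T(2)[OF that] by (simp add: nowhere_dense_def closed_Compl interior_complement)
  moreover have "- H \<subseteq> \<Union>(uminus ` T)"
    using T(3) by blast
  ultimately show ?thesis
    unfolding meager_def using T(1) by blast
qed

lemma Compl_meager_contains_dense_gdelta:
  fixes M :: "'a::polish_space set"
  assumes "meager M"
  obtains K where "gdelta_in euclidean K" "closure K = UNIV" "K \<inter> M = {}"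
proof -
  obtain F where F: "countable F" "\<forall>N\<in>F. nowhere_dense N" "M \<subseteq> \<Union>F"
    using assms unfolding meager_def by blast
  define K where "K = (\<Inter>N\<in>F. - closure N)"
  have "gdelta_in euclidean (- closure N) \<and> closure (- closure N) = UNIV" if "N \<in> F" for N
    using F(2) that open_imp_gdelta_in[of euclidean "- closure N"]
    by (simp add: nowhere_dense_def closure_complement open_Compl)
  then have "gdelta_in euclidean K \<and> closure K = UNIV"
    unfolding K_def using F(1) by (intro dense_gdelta_Inter) auto
  moreover have "K \<inter> M = {}"
    using F(3) closure_subset unfolding K_def by blast
  ultimately show thesis
    using that by blast
qed

lemma countable_dense_subsetE:
  fixes K :: "'a::{metric_space, second_countable_topology} set"
  assumes "closure K = UNIV"
  obtains D where "countable D" "D \<subseteq> K" "closure D = UNIV"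
proof -
  obtain D where "countable D" "D \<subseteq> K" "K \<subseteq> closure D"
    by (rule separable)
  moreover have "closure D = UNIV"
    using closure_minimal[OF \<open>K \<subseteq> closure D\<close> closed_closure] assms by auto
  ultimately show thesis
    using that by blast
qed

lemma dense_gdelta_homeomorphic_image:
  assumes "homeomorphic_maps euclidean euclidean f g" "gdelta_in euclidean H" "closure H = UNIV"
  shows "gdelta_in euclidean (f ` H) \<and> closure (f ` H) = UNIV"
proof
  have f: "homeomorphic_map euclidean euclidean f"
    using assms(1) unfolding homeomorphic_maps_map by (rule conjunct1)
  then show "gdelta_in euclidean (f ` H)"
    using homeomorphic_map_gdeltaness[OF f, of H] assms(2) by simp
  have "continuous_on UNIV f"
    using homeomorphic_imp_continuous_map[OF f] by simp
  then have "continuous_on (closure H) f"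
    by (rule continuous_on_subset) simp
  then have "f ` closure H \<subseteq> closure (f ` H)"
    using image_closure_subset[OF _ closed_closure closure_subset] by blast
  moreover have "f ` UNIV = UNIV"
    using homeomorphic_imp_surjective_map[OF f] by simp
  ultimately show "closure (f ` H) = UNIV"
    using assms(3) by auto
qed

lemma homeomorphic_maps_add_left:
  "homeomorphic_maps euclidean euclidean (\<lambda>x. a + x) (\<lambda>x. - a + x :: 'a::topological_group_add)"
  by (auto simp: homeomorphic_maps_def add.assoc[symmetric] intro!: continuous_intros)

lemma homeomorphic_maps_diff_right:
  "homeomorphic_maps euclidean euclidean (\<lambda>x. x - a) (\<lambda>x. x + a :: 'a::topological_group_add)"
  by (auto simp: homeomorphic_maps_def intro!: continuous_intros)

lemma countable_subset_translate_dense_gdelta: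
  fixes H :: "'a::{topological_group_add, polish_space} set"
  assumes "countable C" "gdelta_in euclidean H" "closure H = UNIV"
  obtains a where "C \<subseteq> (\<lambda>x. a + x) ` H"
proof -
  have "closure (\<Inter>c\<in>C. (\<lambda>x. x - c) ` H) = UNIV"
    using assms dense_gdelta_homeomorphic_image[OF homeomorphic_maps_diff_right]
    by (intro dense_gdelta_Inter[THEN conjunct2]) auto
  then obtain x where "x \<in> (\<Inter>c\<in>C. (\<lambda>x. x - c) ` H)"
    by (metis closure_empty empty_not_UNIV equals0I)
  then have x: "x + c \<in> H" if "c \<in> C" for c
    using that by auto
  have "c \<in> (\<lambda>y. - x + y) ` H" if "c \<in> C" for c
    using x[OF that] by (force simp: add.assoc[symmetric])
  then show thesis
    using that by blast
qed

lemma haar_null_subset: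
  assumes "haar_null B" "A \<subseteq> B"
  shows "haar_null A"
  using assms unfolding haar_null_def by (meson order_trans)

lemma haar_null_translate:
  fixes H :: "'a::{topological_group_add, polish_space} set"
  assumes "haar_null H"
  shows "haar_null ((\<lambda>x. a + x) ` H)"
proof -
  obtain B \<mu> where B: "B \<in> sets borel" "H \<subseteq> B" "prob_space \<mu>" "sets \<mu> = sets (borel :: 'a measure)"
    "\<And>g h. measure \<mu> ((\<lambda>b. g + b + h) ` B) = 0"
    using assms unfolding haar_null_def by auto
  have "(\<lambda>x. a + x) ` B = (\<lambda>x. - a + x) -` B"
    by (force simp: add.assoc[symmetric])
  also have "\<dots> \<in> sets borel"
    using continuous_on_add[OF continuous_on_const continuous_on_id]
    by (rule measurable_sets_borel[OF borel_measurable_continuous_onI B(1)])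
  finally have "(\<lambda>x. a + x) ` B \<in> sets borel" .
  moreover have "(\<lambda>b. g + b + h) ` (\<lambda>x. a + x) ` B = (\<lambda>b. (g + a) + b + h) ` B" for g h
    by (simp add: image_image add.assoc)
  ultimately show ?thesis
    unfolding haar_null_def using B by (intro exI[of _ "(\<lambda>x. a + x) ` B"] exI[of _ \<mu>]) auto
qed

lemma countable_subset_haar_null_gdelta:
  fixes C H :: "'a::{topological_group_add, polish_space} set"
  assumes "countable C" "gdelta_in euclidean H" "closure H = UNIV" "haar_null H"
  shows "\<exists>H'. C \<subseteq> H' \<and> gdelta_in euclidean H' \<and> haar_null H'"
proof -
  obtain a where "C \<subseteq> (\<lambda>x. a + x) ` H"
    using countable_subset_translate_dense_gdelta assms(1-3) by blast
  moreover have "gdelta_in euclidean ((\<lambda>x. a + x) ` H)"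
    using dense_gdelta_homeomorphic_image[OF homeomorphic_maps_add_left assms(2,3)] ..
  ultimately show ?thesis
    using haar_null_translate[OF assms(4)] by blast
qed

theorem theorem5p34:
  assumes "uncountable (UNIV :: 'a::{topological_group_add, polish_space} set)"
  shows "((\<forall>C::'a set. countable C \<longrightarrow>
             (\<exists>H. C \<subseteq> H \<and> gdelta_in euclidean H \<and> haar_null H))
        \<longleftrightarrow> (\<exists>D::'a set. countable D \<and> closure D = UNIV \<and>
             (\<exists>H. D \<subseteq> H \<and> gdelta_in euclidean H \<and> haar_null H)))
       \<and> ((\<exists>D::'a set. countable D \<and> closure D = UNIV \<and>
             (\<exists>H. D \<subseteq> H \<and> gdelta_in euclidean H \<and> haar_null H))
        \<longleftrightarrow> (\<exists>M N::'a set. meager M \<and> haar_null N \<and> M \<union> N = UNIV))"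
proof (intro conjI iffI)
  assume cover: "\<forall>C::'a set. countable C \<longrightarrow> (\<exists>H. C \<subseteq> H \<and> gdelta_in euclidean H \<and> haar_null H)"
  obtain D :: "'a set" where "countable D" "closure D = UNIV"
    using countable_dense_subsetE[of UNIV] by auto
  then show "\<exists>D::'a set. countable D \<and> closure D = UNIV \<and>
      (\<exists>H. D \<subseteq> H \<and> gdelta_in euclidean H \<and> haar_null H)"
    using cover[rule_format, OF \<open>countable D\<close>] by blast
next
  assume "\<exists>D::'a set. countable D \<and> closure D = UNIV \<and>
      (\<exists>H. D \<subseteq> H \<and> gdelta_in euclidean H \<and> haar_null H)"
  then obtain D H :: "'a set" where "closure D = UNIV" "D \<subseteq> H" and
    H: "gdelta_in euclidean H" "haar_null H"
    by blast
  then have dense: "closure H = UNIV"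
    using closure_mono[of D H] by auto
  show "\<forall>C::'a set. countable C \<longrightarrow> (\<exists>H. C \<subseteq> H \<and> gdelta_in euclidean H \<and> haar_null H)"
    using countable_subset_haar_null_gdelta[OF _ H(1) dense H(2)] by blast
  show "\<exists>M N::'a set. meager M \<and> haar_null N \<and> M \<union> N = UNIV"
    using meager_Compl_dense_gdelta[OF H(1) dense] H(2) by blast
next
  assume "\<exists>M N::'a set. meager M \<and> haar_null N \<and> M \<union> N = UNIV"
  then obtain M N :: "'a set" where "meager M" "haar_null N" "M \<union> N = UNIV"
    by blast
  moreover obtain K where K: "gdelta_in euclidean K" "closure K = UNIV" "K \<inter> M = {}"
    using Compl_meager_contains_dense_gdelta[OF \<open>meager M\<close>] by blast
  ultimately have "haar_null K"
    by (intro haar_null_subset[of N K]) auto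
  moreover obtain D where "countable D" "D \<subseteq> K" "closure D = UNIV"
    using countable_dense_subsetE[OF K(2)] .
  ultimately show "\<exists>D::'a set. countable D \<and> closure D = UNIV \<and>
      (\<exists>H. D \<subseteq> H \<and> gdelta_in euclidean H \<and> haar_null H)"
    using K(1) by blast
qed

end
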